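(* Let $G$ and $H$ be two nontrivial connected graphs. Then $$\max\{hn_{cc}(G),hn_{cc}(H),3\}\leq hn_{cc}(G\Box H)\leq hn_{cc}(G)+hn_{cc}(H)-1.$$
   Context: All graphs are finite, simple and undirected. For a graph $G$ and $S\subseteq V(G)$, the cycle interval $\langle S\rangle$ consists of the vertices of $S$ together with every vertex $w\in V(G)\setminus S$ such that $G[S\cup\{w\}]$ contains a cycle through $w$; $S$ is cycle convex if $\langle S\rangle=S$; the cycle convex hull $\langle S\rangle_C$ is the smallest cycle convex set containing $S$; a hull set is a set $S$ with $\langle S\rangle_C=V(G)$, and $hn_{cc}(G)$ is the minimum cardinality of a hull set. The Cartesian product $G\Box H$ has vertex set $V(G)\times V(H)$, with $(g_1,h_1)\sim(g_2,h_2)$ iff ($g_1\sim g_2$ and $h_1=h_2$) or ($g_1=g_2$ and $h_1\sim h_2$). A graph is nontrivial if it has at least two vertices. *)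

theory Defs
  imports Main
begin

definition graph :: "'a set \<Rightarrow> 'a set set \<Rightarrow> bool" where
  "graph V E \<longleftrightarrow> finite V \<and> (\<forall>e\<in>E. \<exists>u v. e = {u, v} \<and> u \<in> V \<and> v \<in> V \<and> u \<noteq> v)"

definition adj :: "'a set set \<Rightarrow> 'a \<Rightarrow> 'a \<Rightarrow> bool" where
  "adj E u v \<longleftrightarrow> {u, v} \<in> E"

definition nontrivial :: "'a set \<Rightarrow> bool" where
  "nontrivial V \<longleftrightarrow> card V \<ge> 2"

definition connected_graph :: "'a set \<Rightarrow> 'a set set \<Rightarrow> bool" where
  "connected_graph V E \<longleftrightarrow>
     (\<forall>u\<in>V. \<forall>v\<in>V. (u, v) \<in> {(x, y). adj E x y}\<^sup>*)"

text \<open>A cycle whose vertices all lie in T (hence a cycle of the induced subgraph G[T]):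
  a list of at least 3 distinct vertices, consecutive ones (cyclically) adjacent.\<close>
definition cycle_in :: "'a set set \<Rightarrow> 'a set \<Rightarrow> 'a list \<Rightarrow> bool" where
  "cycle_in E T xs \<longleftrightarrow> length xs \<ge> 3 \<and> distinct xs \<and> set xs \<subseteq> T \<and>
     (\<forall>i<length xs. adj E (xs ! i) (xs ! ((i + 1) mod length xs)))"

definition cycle_interval :: "'a set \<Rightarrow> 'a set set \<Rightarrow> 'a set \<Rightarrow> 'a set" where
  "cycle_interval V E S =
     S \<union> {w \<in> V - S. \<exists>xs. cycle_in E (S \<union> {w}) xs \<and> w \<in> set xs}"

definition cycle_convex :: "'a set \<Rightarrow> 'a set set \<Rightarrow> 'a set \<Rightarrow> bool" where
  "cycle_convex V E S \<longleftrightarrow> S \<subseteq> V \<and> cycle_interval V E S = S"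

definition cc_hull :: "'a set \<Rightarrow> 'a set set \<Rightarrow> 'a set \<Rightarrow> 'a set" where
  "cc_hull V E S = \<Inter>{C. cycle_convex V E C \<and> S \<subseteq> C}"

definition cc_hull_set :: "'a set \<Rightarrow> 'a set set \<Rightarrow> 'a set \<Rightarrow> bool" where
  "cc_hull_set V E S \<longleftrightarrow> S \<subseteq> V \<and> cc_hull V E S = V"

definition hn_cc :: "'a set \<Rightarrow> 'a set set \<Rightarrow> nat" where
  "hn_cc V E = (LEAST k. \<exists>S. cc_hull_set V E S \<and> card S = k)"

definition box_vertices :: "'a set \<Rightarrow> 'b set \<Rightarrow> ('a \<times> 'b) set" where
  "box_vertices V W = V \<times> W"

definition box_edges :: "'a set \<Rightarrow> 'a set set \<Rightarrow> 'b set \<Rightarrow> 'b set set \<Rightarrow> ('a \<times> 'b) set set" where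
  "box_edges V E W F =
     {{(g1, h), (g2, h)} | g1 g2 h. {g1, g2} \<in> E \<and> h \<in> W} \<union>
     {{(g, h1), (g, h2)} | g h1 h2. g \<in> V \<and> {h1, h2} \<in> F}"

end

theory Submission
  imports Defs
begin

(* A vertex w outside T lies on a cycle of G[T \<union> {w}] iff some walk inside T joins two distinct
   neighbours of w. Projecting such a walk from G \<box> H to G shows that C \<times> V(H) is cycle convex
   whenever C is: the two neighbours of w on the cycle differ from w in the G-coordinate, hence
   agree with it in the H-coordinate, so their projections are distinct. Therefore projections of
   hull sets of G \<box> H are hull sets of G and of H. Any two vertices of G \<box> H lie in a proper
   convex set: a fibre {g} \<times> V(H) or V(G) \<times> {h}, or the pair itself when its vertices differ in
   both coordinates and so are non-adjacent; hence at least three vertices are needed.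
   Conversely, for hull sets S_G, S_H and (g0, h0) \<in> S_G \<times> S_H, the hull of
   S_G \<times> {h0} \<union> {g0} \<times> S_H contains both fibres through (g0, h0), because the fibre embeddings
   map hulls into hulls, and the 4-cycles of G \<box> H spread it along the edges of the connected
   factors to all of V(G) \<times> V(H). *)

lemma adj_commute: "adj E x y \<longleftrightarrow> adj E y x"
  by (simp add: adj_def insert_commute)

lemma graph_adjD: "graph V E \<Longrightarrow> adj E x y \<Longrightarrow> x \<in> V \<and> y \<in> V \<and> x \<noteq> y"
  unfolding graph_def adj_def by (auto simp: doubleton_eq_iff)

lemma nth_append_hd_Suc:
  assumes "i < length xs"
  shows "(xs @ [hd xs]) ! Suc i = xs ! (Suc i mod length xs)"
proof (cases "Suc i < length xs")
  case False
  then have "Suc i = length xs" using assms by simp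
  moreover have "xs \<noteq> []" using assms by auto
  ultimately show ?thesis by (simp add: hd_conv_nth)
qed (simp add: nth_append)

lemma cycle_in_iff_closed_walk:
  "cycle_in E T xs \<longleftrightarrow>
     3 \<le> length xs \<and> distinct xs \<and> set xs \<subseteq> T \<and> successively (adj E) (xs @ [hd xs])"
proof -
  have "(\<forall>i<length xs. adj E (xs ! i) (xs ! ((i + 1) mod length xs)))
        \<longleftrightarrow> successively (adj E) (xs @ [hd xs])"
    unfolding successively_conv_nth
    by (auto simp: nth_append_hd_Suc) (metis nth_append_hd_Suc nth_append less_SucI)+
  then show ?thesis by (auto simp: cycle_in_def)
qed

lemma cycle_in_rotate1: "cycle_in E T xs \<Longrightarrow> cycle_in E T (rotate1 xs)"
  by (cases xs) (auto simp: cycle_in_iff_closed_walk successively_append_iff successively_Cons)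

lemma cycle_in_rotate: "cycle_in E T xs \<Longrightarrow> cycle_in E T (rotate n xs)"
  by (induction n) (simp_all add: cycle_in_rotate1)

lemma successively_shortcut_distinct:
  assumes "successively P xs" "xs \<noteq> []"
  shows "\<exists>ys. successively P ys \<and> distinct ys \<and> ys \<noteq> []
    \<and> hd ys = hd xs \<and> last ys = last xs \<and> set ys \<subseteq> set xs"
  using assms
proof (induction "length xs" arbitrary: xs rule: less_induct)
  case less
  show ?case
  proof (cases "distinct xs")
    case False
    then obtain as x bs cs where xs: "xs = as @ [x] @ bs @ [x] @ cs"
      using not_distinct_decomp by blast
    let ?zs = "as @ x # cs"
    have "successively P ?zs"
      using less.prems(1) by (simp add: xs successively_append_iff successively_Cons)
    moreover have "hd ?zs = hd xs" "last ?zs = last xs" "set ?zs \<subseteq> set xs"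
      by (auto simp: xs hd_append)
    moreover have "length ?zs < length xs" by (simp add: xs)
    ultimately show ?thesis
      using less.hyps[of ?zs] by (metis list.distinct(1) Nil_is_append_conv order_trans)
  qed (use less.prems in blast)
qed

lemma cycle_through_vertex_iff:
  assumes "w \<notin> T"
  shows "(\<exists>xs. cycle_in E (T \<union> {w}) xs \<and> w \<in> set xs) \<longleftrightarrow>
    (\<exists>ys. ys \<noteq> [] \<and> successively (adj E) ys \<and> set ys \<subseteq> T \<and> hd ys \<noteq> last ys
       \<and> adj E w (hd ys) \<and> adj E w (last ys))"
    (is "?cycle \<longleftrightarrow> ?walk")
proof
  assume ?cycle
  then obtain xs k where xs: "cycle_in E (T \<union> {w}) xs" "k < length xs" "xs ! k = w"
    by (metis in_set_conv_nth)
  then have "rotate k xs ! 0 = w" using nth_rotate[of 0 xs k] by force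
  moreover have "rotate k xs \<noteq> []" using xs(2) by auto
  ultimately obtain ys where ys: "rotate k xs = w # ys" by (metis hd_conv_nth list.collapse)
  then have cyc: "cycle_in E (T \<union> {w}) (w # ys)" using cycle_in_rotate[OF xs(1)] by metis
  then have len: "2 \<le> length ys" and dist: "distinct (w # ys)"
    by (auto simp: cycle_in_def)
  then have "ys \<noteq> []" by auto
  moreover from this have "hd ys \<noteq> last ys"
    using len dist by (simp add: hd_conv_nth last_conv_nth nth_eq_iff_index_eq)
  ultimately show ?walk using cyc dist
    by (intro exI[of _ ys])
      (auto simp: cycle_in_iff_closed_walk successively_append_iff successively_Cons adj_commute)
next
  assume ?walk
  then obtain ys where ys: "ys \<noteq> []" "successively (adj E) ys" "set ys \<subseteq> T" "hd ys \<noteq> last ys"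
    "adj E w (hd ys)" "adj E w (last ys)" by blast
  obtain zs where zs: "successively (adj E) zs" "distinct zs" "zs \<noteq> []"
    "hd zs = hd ys" "last zs = last ys" "set zs \<subseteq> set ys"
    using successively_shortcut_distinct[OF ys(2,1)] by blast
  have "length zs \<noteq> 1" using zs ys(4) by (auto simp: length_Suc_conv)
  then have "3 \<le> length (w # zs)" using zs(3) by (cases zs) (auto simp: Suc_le_eq)
  moreover have "successively (adj E) ((w # zs) @ [w])"
    using zs ys by (simp add: successively_Cons successively_append_iff adj_commute)
  ultimately have "cycle_in E (T \<union> {w}) (w # zs)"
    using zs ys(3) assms by (auto simp: cycle_in_iff_closed_walk)
  then show ?cycle by auto
qed

lemma cycle_convexI:
  assumes "S \<subseteq> V"
    and "\<And>w xs. w \<in> V \<Longrightarrow> w \<notin> S \<Longrightarrow> cycle_in E (S \<union> {w}) xs \<Longrightarrow> w \<in> set xs \<Longrightarrow> False"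
  shows "cycle_convex V E S"
  using assms unfolding cycle_convex_def cycle_interval_def by blast

lemma cycle_convexD:
  "cycle_convex V E S \<Longrightarrow> w \<in> V \<Longrightarrow> cycle_in E (S \<union> {w}) xs \<Longrightarrow> w \<in> set xs \<Longrightarrow> w \<in> S"
  unfolding cycle_convex_def cycle_interval_def by blast

lemma cycle_convex_vertices: "cycle_convex V E V"
  by (rule cycle_convexI) auto

lemma cycle_in_card_ge_3: "cycle_in E T xs \<Longrightarrow> finite T \<Longrightarrow> 3 \<le> card T"
  unfolding cycle_in_def by (metis card_mono distinct_card order_trans)

lemma cycle_convex_card_le_1:
  assumes "S \<subseteq> V" "finite S" "card S \<le> 1"
  shows "cycle_convex V E S"
proof (rule cycle_convexI)
  fix w xs assume "cycle_in E (S \<union> {w}) xs"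
  moreover have "card (S \<union> {w}) \<le> 2" using assms by (simp add: card_insert_if)
  ultimately show False using cycle_in_card_ge_3 assms(2) by fastforce
qed (fact assms(1))

lemma triangle_adj:
  assumes "cycle_in E T xs" "length xs = 3" "a \<in> set xs" "b \<in> set xs" "a \<noteq> b"
  shows "adj E a b"
proof -
  obtain p q r where "xs = [p, q, r]"
    using assms(2) by (auto simp: numeral_3_eq_3 length_Suc_conv)
  then show ?thesis
    using assms by (auto simp: cycle_in_iff_closed_walk adj_commute)
qed

lemma cycle_convex_nonadjacent_pair:
  assumes "a \<in> V" "b \<in> V" "\<not> adj E a b"
  shows "cycle_convex V E {a, b}"
proof (rule cycle_convexI)
  fix w xs assume w: "w \<notin> {a, b}" and xs: "cycle_in E ({a, b} \<union> {w}) xs"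
  then have len: "3 \<le> length xs" "length xs = card (set xs)" and sub: "set xs \<subseteq> {a, b, w}"
    by (auto simp: cycle_in_def distinct_card)
  have "card (set xs) \<le> card {a, b, w}" using card_mono[OF _ sub] by simp
  moreover have "card {a, b, w} \<le> 3" by (simp add: card_insert_if)
  moreover have "card {a, b, w} \<le> 2" if "a = b" using that by (simp add: card_insert_if)
  ultimately have "length xs = 3" "a \<noteq> b" "card (set xs) = card {a, b, w}" using len by linarith+
  moreover from this have "set xs = {a, b, w}" using card_seteq[OF _ sub] by simp
  ultimately show False using triangle_adj[OF xs, of a b] assms(3) by auto
qed (use assms in auto)

lemma cc_hull_subset: "S \<subseteq> cc_hull V E S"
  unfolding cc_hull_def by blast

lemma cc_hull_least: "cycle_convex V E C \<Longrightarrow> S \<subseteq> C \<Longrightarrow> cc_hull V E S \<subseteq> C"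
  unfolding cc_hull_def by blast

lemma cc_hull_mono: "S \<subseteq> S' \<Longrightarrow> cc_hull V E S \<subseteq> cc_hull V E S'"
  unfolding cc_hull_def by blast

lemma cycle_convex_cc_hull:
  assumes "S \<subseteq> V"
  shows "cycle_convex V E (cc_hull V E S)"
proof (rule cycle_convexI)
  show "cc_hull V E S \<subseteq> V" using cc_hull_least[OF cycle_convex_vertices assms] .
  fix w xs assume "w \<in> V" "w \<notin> cc_hull V E S" "cycle_in E (cc_hull V E S \<union> {w}) xs" "w \<in> set xs"
  then obtain C where "cycle_convex V E C" "S \<subseteq> C" "w \<notin> C" "cycle_in E (C \<union> {w}) xs"
    unfolding cc_hull_def cycle_in_def by blast
  then show False using \<open>w \<in> V\<close> \<open>w \<in> set xs\<close> cycle_convexD by metis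
qed

lemma cc_hull_set_convex_eq:
  "cc_hull_set V E S \<Longrightarrow> cycle_convex V E C \<Longrightarrow> S \<subseteq> C \<Longrightarrow> C = V"
  using cc_hull_least[of V E C S] by (auto simp: cc_hull_set_def cycle_convex_def)

lemma cc_hull_set_nonempty: "cc_hull_set V E S \<Longrightarrow> V \<noteq> {} \<Longrightarrow> S \<noteq> {}"
  using cc_hull_set_convex_eq[OF _ cycle_convex_card_le_1[of "{}" V E]] by auto

lemma hn_cc_le_card: "cc_hull_set V E S \<Longrightarrow> hn_cc V E \<le> card S"
  unfolding hn_cc_def by (rule Least_le) blast

lemma hn_cc_attained: "\<exists>S. cc_hull_set V E S \<and> card S = hn_cc V E"
proof -
  have "cc_hull_set V E V"
    using cc_hull_subset[of V V E] cc_hull_least[OF cycle_convex_vertices, of V V E]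
    by (auto simp: cc_hull_set_def)
  show ?thesis unfolding hn_cc_def by (rule LeastI_ex) (use \<open>cc_hull_set V E V\<close> in blast)
qed

lemma successively_remdups_adj_map:
  assumes "successively R xs" "\<And>x y. R x y \<Longrightarrow> f x = f y \<or> P (f x) (f y)"
  shows "successively P (remdups_adj (map f xs))"
proof -
  have "successively (\<lambda>x y. x = y \<or> P x y) (map f xs)"
    unfolding successively_map by (rule successively_mono[OF assms(1)]) (rule assms(2))
  then have "successively (\<lambda>x y. x = y \<or> P x y) (remdups_adj (map f xs))"
    by (rule successively_remdups_adjI)
  moreover have "distinct_adj (remdups_adj (map f xs))" by simp
  ultimately show ?thesis by (auto simp: successively_conv_nth distinct_adj_conv_nth)
qed

lemma cycle_convex_vimage_embedding:
  assumes C: "cycle_convex V' E' C" and f: "inj_on f V" "f ` V \<subseteq> V'"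
    and hom: "\<And>x y. x \<in> V \<Longrightarrow> y \<in> V \<Longrightarrow> adj E x y \<Longrightarrow> adj E' (f x) (f y)"
  shows "cycle_convex V E {x \<in> V. f x \<in> C}"
proof (rule cycle_convexI)
  fix w xs assume w: "w \<in> V" "w \<notin> {x \<in> V. f x \<in> C}"
    and xs: "cycle_in E ({x \<in> V. f x \<in> C} \<union> {w}) xs" "w \<in> set xs"
  have sub: "set xs \<subseteq> V" using xs(1) w(1) by (auto simp: cycle_in_def)
  have ne: "xs \<noteq> []" using xs(2) by auto
  then have "set (xs @ [hd xs]) \<subseteq> V" using sub hd_in_set by auto
  moreover have "successively (adj E) (xs @ [hd xs])" using xs(1) by (simp add: cycle_in_iff_closed_walk)
  ultimately have "successively (adj E') (map f (xs @ [hd xs]))"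
    unfolding successively_map by (blast intro: successively_mono hom)
  then have "cycle_in E' (C \<union> {f w}) (map f xs)"
    using xs sub inj_on_subset[OF f(1) sub] hd_map[OF ne, of f]
    by (auto simp: cycle_in_iff_closed_walk distinct_map)
  then have "f w \<in> C" using cycle_convexD[OF C] f(2) w(1) xs(2) by auto
  then show False using w by simp
qed auto

lemma cc_hull_image_embedding:
  assumes "S \<subseteq> V" "inj_on f V" "f ` V \<subseteq> V'"
    and "\<And>x y. x \<in> V \<Longrightarrow> y \<in> V \<Longrightarrow> adj E x y \<Longrightarrow> adj E' (f x) (f y)"
  shows "f ` cc_hull V E S \<subseteq> cc_hull V' E' (f ` S)"
proof -
  have "cycle_convex V' E' (cc_hull V' E' (f ` S))"
    using assms(1,3) by (intro cycle_convex_cc_hull) auto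
  then have "cycle_convex V E {x \<in> V. f x \<in> cc_hull V' E' (f ` S)}"
    using assms(2-4) by (rule cycle_convex_vimage_embedding)
  moreover have "S \<subseteq> {x \<in> V. f x \<in> cc_hull V' E' (f ` S)}"
    using assms(1) cc_hull_subset[of "f ` S" V' E'] by auto
  ultimately have "cc_hull V E S \<subseteq> {x \<in> V. f x \<in> cc_hull V' E' (f ` S)}"
    by (rule cc_hull_least)
  then show ?thesis by auto
qed

lemma cycle_convex_vimage_projection:
  assumes C: "cycle_convex V E C" and \<pi>: "\<pi> ` V' \<subseteq> V"
    and hom: "\<And>x y. adj E' x y \<Longrightarrow> \<pi> x = \<pi> y \<or> adj E (\<pi> x) (\<pi> y)"
    and fibre: "\<And>x y. adj E' x y \<Longrightarrow> \<pi> x \<noteq> \<pi> y \<Longrightarrow> \<sigma> x = \<sigma> y"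
    and inj: "\<And>x y. \<pi> x = \<pi> y \<Longrightarrow> \<sigma> x = \<sigma> y \<Longrightarrow> x = y"
  shows "cycle_convex V' E' {x \<in> V'. \<pi> x \<in> C}"
proof (rule cycle_convexI)
  fix w xs assume w: "w \<in> V'" "w \<notin> {x \<in> V'. \<pi> x \<in> C}"
    and "cycle_in E' ({x \<in> V'. \<pi> x \<in> C} \<union> {w}) xs" "w \<in> set xs"
  then obtain ys where ys: "ys \<noteq> []" "successively (adj E') ys" "set ys \<subseteq> {x \<in> V'. \<pi> x \<in> C}"
    "hd ys \<noteq> last ys" "adj E' w (hd ys)" "adj E' w (last ys)"
    using cycle_through_vertex_iff[of w "{x \<in> V'. \<pi> x \<in> C}" E'] by blast
  have wC: "\<pi> w \<notin> C" using w by simp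
  have "hd ys \<in> set ys" "last ys \<in> set ys" using ys(1) by simp_all
  then have ends: "\<pi> (hd ys) \<in> C" "\<pi> (last ys) \<in> C" using ys(3) by auto
  then have "adj E (\<pi> w) (\<pi> (hd ys))" "adj E (\<pi> w) (\<pi> (last ys))"
    using hom ys(5,6) wC by metis+
  moreover have "\<pi> (hd ys) \<noteq> \<pi> (last ys)"
  proof
    assume "\<pi> (hd ys) = \<pi> (last ys)"
    moreover have "\<sigma> (hd ys) = \<sigma> (last ys)"
      using fibre[OF ys(5)] fibre[OF ys(6)] ends wC by fastforce
    ultimately show False using inj ys(4) by blast
  qed
  moreover have "successively (adj E) (remdups_adj (map \<pi> ys))"
    using ys(2) hom by (rule successively_remdups_adj_map)
  moreover have "set (remdups_adj (map \<pi> ys)) \<subseteq> C" using ys(3) by auto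
  ultimately have "\<exists>zs. zs \<noteq> [] \<and> successively (adj E) zs \<and> set zs \<subseteq> C \<and> hd zs \<noteq> last zs
      \<and> adj E (\<pi> w) (hd zs) \<and> adj E (\<pi> w) (last zs)"
    using ys(1) by (intro exI[of _ "remdups_adj (map \<pi> ys)"]) (simp add: hd_map last_map)
  then obtain zs where "cycle_in E (C \<union> {\<pi> w}) zs" "\<pi> w \<in> set zs"
    using cycle_through_vertex_iff[OF wC] by blast
  then show False using cycle_convexD[OF C] \<pi> w wC by blast
qed auto

lemma hn_cc_le_projection:
  assumes "finite V'" "\<pi> ` V' = V"
    and vimage: "\<And>C. cycle_convex V E C \<Longrightarrow> cycle_convex V' E' {x \<in> V'. \<pi> x \<in> C}"
  shows "hn_cc V E \<le> hn_cc V' E'"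
proof -
  obtain S where S: "cc_hull_set V' E' S" "card S = hn_cc V' E'"
    using hn_cc_attained by blast
  have "V \<subseteq> C" if "cycle_convex V E C" "\<pi> ` S \<subseteq> C" for C
  proof -
    have "S \<subseteq> {x \<in> V'. \<pi> x \<in> C}" using S(1) that(2) by (auto simp: cc_hull_set_def)
    then have "{x \<in> V'. \<pi> x \<in> C} = V'" using cc_hull_set_convex_eq[OF S(1) vimage[OF that(1)]] by simp
    then show ?thesis using assms(2) by auto
  qed
  then have "V \<subseteq> cc_hull V E (\<pi> ` S)" unfolding cc_hull_def by blast
  moreover have "\<pi> ` S \<subseteq> V" using S(1) assms(2) by (auto simp: cc_hull_set_def)
  ultimately have "cc_hull_set V E (\<pi> ` S)"
    using cc_hull_least[OF cycle_convex_vertices, of "\<pi> ` S" V E] by (auto simp: cc_hull_set_def)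
  then have "hn_cc V E \<le> card (\<pi> ` S)" by (rule hn_cc_le_card)
  also have "\<dots> \<le> card S"
    using S(1) assms(1) by (intro card_image_le) (auto simp: cc_hull_set_def intro: finite_subset)
  finally show ?thesis using S(2) by simp
qed

lemma adj_box_edges:
  "adj (box_edges V E W F) (g1, h1) (g2, h2) \<longleftrightarrow>
     (h1 = h2 \<and> h1 \<in> W \<and> adj E g1 g2) \<or> (g1 = g2 \<and> g1 \<in> V \<and> adj F h1 h2)"
proof
  assume "adj (box_edges V E W F) (g1, h1) (g2, h2)"
  then show "(h1 = h2 \<and> h1 \<in> W \<and> adj E g1 g2) \<or> (g1 = g2 \<and> g1 \<in> V \<and> adj F h1 h2)"
    unfolding adj_def box_edges_def by (auto simp: doubleton_eq_iff insert_commute)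
qed (auto simp: adj_def box_edges_def)

lemma cycle_convex_box_left:
  assumes "cycle_convex V E C"
  shows "cycle_convex (V \<times> W) (box_edges V E W F) (C \<times> W)"
proof -
  have "cycle_convex (V \<times> W) (box_edges V E W F) {x \<in> V \<times> W. fst x \<in> C}"
    using assms by (rule cycle_convex_vimage_projection[where \<sigma> = snd])
      (auto simp: adj_box_edges prod_eq_iff)
  moreover have "{x \<in> V \<times> W. fst x \<in> C} = C \<times> W"
    using assms by (auto simp: cycle_convex_def)
  ultimately show ?thesis by simp
qed

lemma cycle_convex_box_right:
  assumes "cycle_convex W F C"
  shows "cycle_convex (V \<times> W) (box_edges V E W F) (V \<times> C)"
proof -
  have "cycle_convex (V \<times> W) (box_edges V E W F) {x \<in> V \<times> W. snd x \<in> C}"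
    using assms by (rule cycle_convex_vimage_projection[where \<sigma> = fst])
      (auto simp: adj_box_edges prod_eq_iff)
  moreover have "{x \<in> V \<times> W. snd x \<in> C} = V \<times> C"
    using assms by (auto simp: cycle_convex_def)
  ultimately show ?thesis by simp
qed

lemma hn_cc_le_box_left:
  assumes "finite V" "finite W" "W \<noteq> {}"
  shows "hn_cc V E \<le> hn_cc (V \<times> W) (box_edges V E W F)"
proof (rule hn_cc_le_projection[where \<pi> = fst])
  fix C assume C: "cycle_convex V E C"
  then have "{x \<in> V \<times> W. fst x \<in> C} = C \<times> W" by (auto simp: cycle_convex_def)
  then show "cycle_convex (V \<times> W) (box_edges V E W F) {x \<in> V \<times> W. fst x \<in> C}"
    using cycle_convex_box_left[OF C] by simp
qed (use assms in auto)

lemma hn_cc_le_box_right: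
  assumes "finite V" "finite W" "V \<noteq> {}"
  shows "hn_cc W F \<le> hn_cc (V \<times> W) (box_edges V E W F)"
proof (rule hn_cc_le_projection[where \<pi> = snd])
  fix C assume C: "cycle_convex W F C"
  then have "{x \<in> V \<times> W. snd x \<in> C} = V \<times> C" by (auto simp: cycle_convex_def)
  then show "cycle_convex (V \<times> W) (box_edges V E W F) {x \<in> V \<times> W. snd x \<in> C}"
    using cycle_convex_box_right[OF C] by simp
qed (use assms in auto)

lemma box_small_set_in_proper_convex:
  assumes fin: "finite V" "finite W" and card: "2 \<le> card V" "2 \<le> card W"
    and S: "S \<subseteq> V \<times> W" "card S \<le> 2"
  obtains C where "cycle_convex (V \<times> W) (box_edges V E W F) C" "S \<subseteq> C" "C \<noteq> V \<times> W"
proof -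
  have card_VW: "card (V \<times> W) = card V * card W" by (simp add: card_cartesian_product)
  have proper: "C \<noteq> V \<times> W" if "card C < card (V \<times> W)" for C using that by auto
  show ?thesis
  proof (cases "\<exists>g\<in>V. S \<subseteq> {g} \<times> W")
    case True
    then obtain g where g: "g \<in> V" "S \<subseteq> {g} \<times> W" by blast
    have "cycle_convex (V \<times> W) (box_edges V E W F) ({g} \<times> W)"
      using g(1) by (intro cycle_convex_box_left cycle_convex_card_le_1) auto
    moreover have "card ({g} \<times> W) < card (V \<times> W)"
      using card card_VW by (simp add: card_cartesian_product)
    ultimately show ?thesis by (rule that[OF _ g(2) proper])
  next
    case not_column: False
    show ?thesis
    proof (cases "\<exists>h\<in>W. S \<subseteq> V \<times> {h}")
      case True
      then obtain h where h: "h \<in> W" "S \<subseteq> V \<times> {h}" by blast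
      have "cycle_convex (V \<times> W) (box_edges V E W F) (V \<times> {h})"
        using h(1) by (intro cycle_convex_box_right cycle_convex_card_le_1) auto
      moreover have "card (V \<times> {h}) < card (V \<times> W)"
        using card card_VW by (simp add: card_cartesian_product)
      ultimately show ?thesis by (rule that[OF _ h(2) proper])
    next
      case not_row: False
      have "V \<noteq> {}" using card(1) by auto
      then have "S \<noteq> {}" using not_column by blast
      moreover have "finite S" using S(1) fin finite_subset by blast
      ultimately have "card S \<noteq> 0" by simp
      moreover have "card S \<noteq> 1"
      proof
        assume "card S = 1"
        then obtain a where "S = {a}" by (auto simp: card_1_singleton_iff)
        then show False using not_column S(1) by (cases a) auto
      qed
      ultimately have "card S = 2" using S(2) by linarith
      then obtain a b where ab: "S = {a, b}" "a \<noteq> b" by (auto simp: card_2_iff)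
      have "fst a \<noteq> fst b"
      proof
        assume "fst a = fst b"
        then have "S \<subseteq> {fst a} \<times> W" using S(1) ab(1) by (cases a; cases b) auto
        then show False using not_column S(1) ab(1) by auto
      qed
      moreover have "snd a \<noteq> snd b"
      proof
        assume "snd a = snd b"
        then have "S \<subseteq> V \<times> {snd a}" using S(1) ab(1) by (cases a; cases b) auto
        then show False using not_row S(1) ab(1) by auto
      qed
      ultimately have "\<not> adj (box_edges V E W F) a b" by (cases a; cases b) (simp add: adj_box_edges)
      then have "cycle_convex (V \<times> W) (box_edges V E W F) {a, b}"
        using S(1) ab(1) by (intro cycle_convex_nonadjacent_pair) auto
      moreover have "card {a, b} < card (V \<times> W)"
        using ab(2) card card_VW mult_le_mono[OF card] by simp
      ultimately show ?thesis using ab(1) by (intro that[OF _ _ proper]) auto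
    qed
  qed
qed

lemma three_le_hn_cc_box:
  assumes "finite V" "finite W" "2 \<le> card V" "2 \<le> card W"
  shows "3 \<le> hn_cc (V \<times> W) (box_edges V E W F)"
proof (rule ccontr)
  assume "\<not> ?thesis"
  moreover obtain S where S: "cc_hull_set (V \<times> W) (box_edges V E W F) S"
    "card S = hn_cc (V \<times> W) (box_edges V E W F)"
    using hn_cc_attained by blast
  ultimately have card: "card S \<le> 2" by simp
  have sub: "S \<subseteq> V \<times> W" using S(1) by (simp add: cc_hull_set_def)
  obtain C where "cycle_convex (V \<times> W) (box_edges V E W F) C" "S \<subseteq> C" "C \<noteq> V \<times> W"
    by (rule box_small_set_in_proper_convex[OF assms sub card])
  then show False using cc_hull_set_convex_eq[OF S(1)] by blast
qed

lemma box_convex_square: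
  assumes "graph V E" "graph W F" and C: "cycle_convex (V \<times> W) (box_edges V E W F) C"
    and adj: "adj E g g'" "adj F h h'"
    and "(g, h) \<in> C" "(g, h') \<in> C" "(g', h) \<in> C"
  shows "(g', h') \<in> C"
proof -
  have "g \<in> V" "g' \<in> V" "g \<noteq> g'" "h \<in> W" "h' \<in> W" "h \<noteq> h'"
    using graph_adjD[OF assms(1) adj(1)] graph_adjD[OF assms(2) adj(2)] by auto
  then have "cycle_in (box_edges V E W F) (C \<union> {(g', h')}) [(g', h'), (g', h), (g, h), (g, h')]"
    using assms(6-8) adj by (auto simp: cycle_in_iff_closed_walk adj_box_edges adj_commute)
  then show ?thesis using cycle_convexD[OF C] \<open>g' \<in> V\<close> \<open>h' \<in> W\<close> by auto
qed

lemma box_convex_cross_eq: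
  assumes gE: "graph V E" "connected_graph V E" and gF: "graph W F" "connected_graph W F"
    and C: "cycle_convex (V \<times> W) (box_edges V E W F) C"
    and "g0 \<in> V" "h0 \<in> W" "V \<times> {h0} \<subseteq> C" "{g0} \<times> W \<subseteq> C"
  shows "C = V \<times> W"
proof -
  have "(g, h) \<in> C" if "g \<in> V" "h \<in> W" for g h
  proof -
    have "(g0, g) \<in> {(x, y). adj E x y}\<^sup>*"
      using gE(2) assms(6) that(1) by (simp add: connected_graph_def)
    then have "\<forall>h \<in> W. (g, h) \<in> C"
    proof (induction rule: rtrancl_induct)
      case base
      then show ?case using assms(9) by auto
    next
      case (step g g')
      then have gg': "adj E g g'" and column: "\<forall>h \<in> W. (g, h) \<in> C" by auto
      have "(g', h) \<in> C" if "h \<in> W" for h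
      proof -
        have "(h0, h) \<in> {(x, y). adj F x y}\<^sup>*"
          using gF(2) assms(7) that by (simp add: connected_graph_def)
        then show ?thesis
        proof (induction rule: rtrancl_induct)
          case base
          show ?case using assms(8) graph_adjD[OF gE(1) gg'] by auto
        next
          case (step h h')
          then show ?case
            using box_convex_square[OF gE(1) gF(1) C gg'] column graph_adjD[OF gF(1)] by auto
        qed
      qed
      then show ?case by blast
    qed
    then show ?thesis using that(2) by blast
  qed
  then show ?thesis using C by (auto simp: cycle_convex_def)
qed

lemma hn_cc_box_le:
  assumes gE: "graph V E" "connected_graph V E" "V \<noteq> {}"
    and gF: "graph W F" "connected_graph W F" "W \<noteq> {}"
  shows "hn_cc (V \<times> W) (box_edges V E W F) \<le> hn_cc V E + hn_cc W F - 1"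
proof -
  let ?E = "box_edges V E W F"
  obtain SG where SG: "cc_hull_set V E SG" "card SG = hn_cc V E"
    using hn_cc_attained by blast
  obtain SH where SH: "cc_hull_set W F SH" "card SH = hn_cc W F"
    using hn_cc_attained by blast
  obtain g0 h0 where g0: "g0 \<in> SG" and h0: "h0 \<in> SH"
    using cc_hull_set_nonempty[OF SG(1) gE(3)] cc_hull_set_nonempty[OF SH(1) gF(3)] by blast
  have sub: "SG \<subseteq> V" "SH \<subseteq> W" using SG(1) SH(1) by (auto simp: cc_hull_set_def)
  define T where "T = SG \<times> {h0} \<union> {g0} \<times> SH"
  have T: "T \<subseteq> V \<times> W" using sub g0 h0 by (auto simp: T_def)
  have "(\<lambda>g. (g, h0)) ` cc_hull V E SG \<subseteq> cc_hull (V \<times> W) ?E ((\<lambda>g. (g, h0)) ` SG)"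
    using sub h0 by (intro cc_hull_image_embedding) (auto simp: inj_on_def adj_box_edges)
  also have "\<dots> \<subseteq> cc_hull (V \<times> W) ?E T" by (rule cc_hull_mono) (auto simp: T_def)
  finally have row: "V \<times> {h0} \<subseteq> cc_hull (V \<times> W) ?E T" using SG(1) by (auto simp: cc_hull_set_def)
  have "(\<lambda>h. (g0, h)) ` cc_hull W F SH \<subseteq> cc_hull (V \<times> W) ?E ((\<lambda>h. (g0, h)) ` SH)"
    using sub g0 by (intro cc_hull_image_embedding) (auto simp: inj_on_def adj_box_edges)
  also have "\<dots> \<subseteq> cc_hull (V \<times> W) ?E T" by (rule cc_hull_mono) (auto simp: T_def)
  finally have column: "{g0} \<times> W \<subseteq> cc_hull (V \<times> W) ?E T" using SH(1) by (auto simp: cc_hull_set_def)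
  have "cc_hull (V \<times> W) ?E T = V \<times> W"
    using box_convex_cross_eq[OF gE(1,2) gF(1,2) cycle_convex_cc_hull[OF T] _ _ row column]
      sub g0 h0 by blast
  then have "hn_cc (V \<times> W) ?E \<le> card T"
    using T by (intro hn_cc_le_card) (simp add: cc_hull_set_def)
  also have "card T = card SG + card SH - 1"
  proof -
    have "finite SG" "finite SH"
      using sub gE(1) gF(1) by (auto simp: graph_def intro: finite_subset)
    moreover have "SG \<times> {h0} \<inter> {g0} \<times> SH = {(g0, h0)}" using g0 h0 by auto
    ultimately show ?thesis
      using card_Un_Int[of "SG \<times> {h0}" "{g0} \<times> SH"] by (simp add: T_def card_cartesian_product)
  qed
  finally show ?thesis using SG(2) SH(2) by simp
qed

theorem mainTheorem7:
  fixes V :: "'a set" and E :: "'a set set" and W :: "'b set" and F :: "'b set set"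
  assumes "graph V E" and "connected_graph V E" and "nontrivial V"
    and "graph W F" and "connected_graph W F" and "nontrivial W"
  shows "max (max (hn_cc V E) (hn_cc W F)) 3
           \<le> hn_cc (box_vertices V W) (box_edges V E W F)
       \<and> hn_cc (box_vertices V W) (box_edges V E W F)
           \<le> hn_cc V E + hn_cc W F - 1"
proof -
  have fin: "finite V" "finite W" using assms(1,4) by (simp_all add: graph_def)
  have card: "2 \<le> card V" "2 \<le> card W" using assms(3,6) by (simp_all add: nontrivial_def)
  then have ne: "V \<noteq> {}" "W \<noteq> {}" by auto
  show ?thesis
    using hn_cc_le_box_left[OF fin ne(2)] hn_cc_le_box_right[OF fin ne(1)]
      three_le_hn_cc_box[OF fin card] hn_cc_box_le[OF assms(1,2) ne(1) assms(4,5) ne(2)]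
    by (simp add: box_vertices_def)
qed

end
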